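(* Let $d\ge1$ and let $\alpha_1,\dots,\alpha_{\varphi(d)}$ be representatives of the reduced residue classes modulo $d$. Then for every integer $a$, $$\rho(a,d)\in\mathbb Q[\rho(\alpha_1,d),\dots,\rho(\alpha_{\varphi(d)-1},d)],$$ the subring of $\mathbb R$ generated over $\mathbb Q$ by $\rho(\alpha_1,d),\dots,\rho(\alpha_{\varphi(d)-1},d)$.
   Context: $\varphi$ is Euler's totient. For integers $a$ and $d\ge1$, $\rho(a,d)=A\sum_{t\ge1,\ t\equiv a\pmod d}r(t)$, where $A=\prod_p\bigl(1-\frac{1}{p(p-1)}\bigr)$ (product over primes) and $r(t)=\frac{1}{t^2}\prod_{p\mid t}\frac{p^2-1}{p^2-p-1}$. *)

theory Defs
  imports "HOL-Analysis.Analysis" "HOL-Number_Theory.Number_Theory"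
begin

definition artinA :: real where
  "artinA = (\<Prod>n. if prime n then 1 - 1 / (real n * (real n - 1)) else 1)"

definition rfun :: "nat \<Rightarrow> real" where
  "rfun t = 1 / (real t)^2 *
     (\<Prod>p\<in>prime_factors t. ((real p)^2 - 1) / ((real p)^2 - real p - 1))"

definition rho :: "int \<Rightarrow> nat \<Rightarrow> real" where
  "rho a d = artinA * (\<Sum>\<^sub>\<infinity> t \<in> {t::nat. t \<ge> 1 \<and> [int t = a] (mod int d)}. rfun t)"

inductive_set Qring :: "real set \<Rightarrow> real set" for S :: "real set" where
  rat: "q \<in> \<rat> \<Longrightarrow> q \<in> Qring S"
| gen: "x \<in> S \<Longrightarrow> x \<in> Qring S"
| add: "x \<in> Qring S \<Longrightarrow> y \<in> Qring S \<Longrightarrow> x + y \<in> Qring S"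
| mult: "x \<in> Qring S \<Longrightarrow> y \<in> Qring S \<Longrightarrow> x * y \<in> Qring S"

end

(* Since r is multiplicative with Euler factors sum_k r(p^k) = (1 - 1/(p(p-1)))^-1, the constant A
   is the reciprocal of sum_t r(t), so the values rho(sigma, d) over all residues sigma mod d add
   up to 1.  If a prime p divides gcd(sigma, d), writing each t = sigma (mod d) as p^k s with
   p not dividing s expresses sum_{t = sigma} r(t) through the class sums of the classes tau of s,
   with coefficients sum_{k >= 1, p^k tau = sigma} r(p^k); these are rational because p^k mod d is
   eventually periodic, so they are eventually periodic geometric series in 1/p^2.  As
   gcd(tau, d) < gcd(sigma, d), induction makes every rho(sigma, d) a nonnegative rational
   combination of the rho(beta, d) with beta coprime to d.  Substituted into the relation
   sum_sigma rho(sigma, d) = 1 this gives a rational linear relation among the phi(d) coprime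
   values whose coefficients are all at least 1, and it can be solved for any one of them. *)

theory Submission
  imports Defs
begin

lemma prime_sq_diff_ge_1:
  assumes "prime p"
  shows "(real p)^2 - real p - 1 \<ge> 1"
proof -
  have "real p \<ge> 2" using prime_ge_2_nat[OF assms] by simp
  then have "real p * (real p - 1) \<ge> 2 * 1" by (intro mult_mono) auto
  then show ?thesis by (simp add: power2_eq_square algebra_simps)
qed

definition rfun_factor :: "nat \<Rightarrow> real" where
  "rfun_factor p = ((real p)^2 - 1) / ((real p)^2 - real p - 1)"

lemma rfun_altdef: "rfun t = 1 / (real t)^2 * (\<Prod>p\<in>prime_factors t. rfun_factor p)"
  by (simp add: rfun_def rfun_factor_def)

lemma rfun_factor_pos: "prime p \<Longrightarrow> rfun_factor p > 0"
  using prime_sq_diff_ge_1[of p] by (simp add: rfun_factor_def)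

lemma rfun_factor_rat: "rfun_factor p \<in> \<rat>"
  unfolding rfun_factor_def by (intro Rats_divide Rats_diff Rats_power) auto

lemma rfun_nonneg: "rfun t \<ge> 0"
  unfolding rfun_altdef by (intro mult_nonneg_nonneg prod_nonneg)
    (auto intro: less_imp_le rfun_factor_pos dest: in_prime_factors_imp_prime)

lemma rfun_0 [simp]: "rfun 0 = 0"
  by (simp add: rfun_def)

lemma rfun_1 [simp]: "rfun (Suc 0) = 1"
  by (simp add: rfun_def)

lemma rfun_mult:
  assumes "coprime m n"
  shows "rfun (m * n) = rfun m * rfun n"
proof (cases "m = 0 \<or> n = 0")
  case False
  have "prime_factors m \<inter> prime_factors n = {}"
    using assms by (auto simp: in_prime_factors_iff dest: coprime_common_divisor not_prime_unit)
  moreover have "prime_factors (m * n) = prime_factors m \<union> prime_factors n"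
    using False by (intro prime_factors_product) auto
  ultimately show ?thesis
    unfolding rfun_altdef by (simp add: prod.union_disjoint power_mult_distrib)
qed auto

lemma rfun_prime_power:
  assumes "prime p" "k \<ge> 1"
  shows "rfun (p ^ k) = rfun_factor p * (1 / (real p)^2) ^ k"
proof -
  have "prime_factors (p ^ k) = {p}"
    using assms by (simp add: prime_factors_power prime_prime_factors)
  then show ?thesis
    unfolding rfun_altdef by (simp add: power_one_over flip: power_mult) (simp add: mult_ac power_mult)
qed

lemma rfun_factor_le_sqrt:
  assumes "prime p" "p \<noteq> 2"
  shows "rfun_factor p \<le> sqrt (real p)"
proof -
  define x where "x = real p"
  have x3: "x \<ge> 3" using prime_ge_2_nat[OF assms(1)] assms(2) by (simp add: x_def)
  have "(3*x + 1) * (x - 3) \<ge> 0" using x3 by simp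
  then have "5 * (x^2 - 1) \<le> 8 * (x^2 - x - 1)" by (simp add: power2_eq_square algebra_simps)
  then have "rfun_factor p \<le> 8/5"
    using prime_sq_diff_ge_1[OF assms(1)] by (simp add: rfun_factor_def divide_le_eq x_def)
  also have "8/5 \<le> sqrt 3" by (rule real_le_rsqrt) (simp add: power2_eq_square)
  also have "sqrt 3 \<le> sqrt x" using x3 by simp
  finally show ?thesis by (simp add: x_def)
qed

lemma prod_prime_factors_le:
  assumes "t > (0::nat)"
  shows "(\<Prod>p\<in>prime_factors t. p) \<le> t"
proof -
  have "(\<Prod>p\<in>prime_factors t. p) \<le> (\<Prod>p\<in>prime_factors t. p ^ multiplicity p t)"
  proof (intro prod_mono conjI)
    fix p assume p: "p \<in> prime_factors t"
    then have "multiplicity p t \<ge> 1" using assms by (auto simp: prime_factors_multiplicity)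
    then show "p \<le> p ^ multiplicity p t"
      using p by (metis in_prime_factors_imp_prime power_increasing power_one_right prime_gt_1_nat
          less_imp_le_nat)
  qed simp
  also have "\<dots> = t" using assms by (subst prod_prime_factors) auto
  finally show ?thesis .
qed

lemma prod_rfun_factor_le:
  assumes "t > (0::nat)"
  shows "(\<Prod>p\<in>prime_factors t. rfun_factor p) \<le> 3 * sqrt (real t)"
proof -
  define P where "P = prime_factors t"
  have nonneg: "rfun_factor p \<ge> 0" if "p \<in> P" for p
    using that by (auto simp: P_def intro: less_imp_le rfun_factor_pos dest: in_prime_factors_imp_prime)
  have "(\<Prod>p\<in>P. rfun_factor p) \<le> 3 * (\<Prod>p\<in>P - {2}. rfun_factor p)"
  proof (cases "2 \<in> P")
    case True
    have "rfun_factor 2 = 3" by (simp add: rfun_factor_def)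
    then show ?thesis using True by (simp add: P_def prod.remove)
  next
    case False
    then show ?thesis using nonneg by (simp add: prod_nonneg)
  qed
  also have "(\<Prod>p\<in>P - {2}. rfun_factor p) \<le> (\<Prod>p\<in>P - {2}. sqrt (real p))"
    using nonneg by (intro prod_mono) (auto simp: P_def intro: rfun_factor_le_sqrt dest: in_prime_factors_imp_prime)
  also have "\<dots> \<le> (\<Prod>p\<in>P. sqrt (real p))"
    by (rule prod_mono2) (auto simp: P_def dest!: in_prime_factors_imp_prime prime_ge_1_nat)
  also have "\<dots> = sqrt (real (\<Prod>p\<in>P. p))"
    by (induction P rule: infinite_finite_induct) (auto simp: real_sqrt_mult)
  also have "\<dots> \<le> sqrt (real t)"
    using prod_prime_factors_le[OF assms] by (metis P_def of_nat_le_iff of_nat_prod real_sqrt_le_iff)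
  finally show ?thesis by (simp add: P_def)
qed

lemma rfun_le:
  assumes "t > (0::nat)"
  shows "rfun t \<le> 3 * real t powr (-3/2)"
proof -
  have t: "real t > 0" using assms by simp
  have "rfun t \<le> 1 / (real t)^2 * (3 * sqrt (real t))"
    unfolding rfun_altdef using prod_rfun_factor_le[OF assms] by (intro mult_left_mono) auto
  also have "\<dots> = 3 * (real t powr (1/2) / real t powr 2)"
    using t by (simp add: powr_half_sqrt powr_numeral)
  also have "real t powr (1/2) / real t powr 2 = real t powr (-3/2)"
    by (subst powr_diff[symmetric]) simp
  finally show ?thesis .
qed

lemma summable_rfun: "summable rfun"
proof -
  have "summable (\<lambda>n. 3 * real n powr (-3/2))"
    by (intro summable_mult) (simp add: summable_real_powr_iff)
  then show ?thesis
    by (rule summable_comparison_test'[where N=1]) (use rfun_le rfun_nonneg in fastforce)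
qed

lemma rfun_summable_on: "rfun summable_on A"
proof -
  have "rfun summable_on UNIV"
    using rfun_nonneg summable_rfun by (simp add: summable_on_UNIV_nonneg_real_iff)
  then show ?thesis by (rule summable_on_subset_banach) simp
qed

lemma inj_on_prime_power_mult:
  fixes p :: nat
  assumes "prime p" "\<forall>s\<in>T. \<not> p dvd s"
  shows "inj_on (\<lambda>(k, s). p^k * s) (K \<times> T)"
proof (rule inj_onI, clarify)
  fix k s k' s' assume "k \<in> K" "s \<in> T" "k' \<in> K" "s' \<in> T" and eq: "p^k * s = p^k' * s'"
  then have "multiplicity p (p^k * s) = k" "multiplicity p (p^k' * s') = k'"
    using assms by (auto intro!: multiplicity_decomposeI simp: prime_gt_0_nat)
  then have "k = k'" using eq by simp
  then show "k = k' \<and> s = s'" using eq assms(1) by (simp add: prime_gt_0_nat)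
qed

lemma infsum_rfun_prime_power_mult:
  fixes p :: nat
  assumes "prime p" "\<forall>s\<in>T. \<not> p dvd s"
  shows "infsum rfun ((\<lambda>(k, s). p^k * s) ` (K \<times> T)) = (\<Sum>\<^sub>\<infinity>k\<in>K. rfun (p^k)) * infsum rfun T"
proof -
  let ?h = "\<lambda>(k, s). p^k * s"
  have inj: "inj_on ?h (K \<times> T)" by (rule inj_on_prime_power_mult[OF assms])
  have split: "(rfun \<circ> ?h) x = (\<lambda>(k, s). rfun (p^k) * rfun s) x" if "x \<in> K \<times> T" for x
    using that assms by (auto simp: prime_imp_coprime intro!: rfun_mult)
  have "(rfun \<circ> ?h) summable_on (K \<times> T)"
    using rfun_summable_on inj by (simp add: summable_on_reindex[symmetric])
  then have summable: "(\<lambda>(k, s). rfun (p^k) * rfun s) summable_on (K \<times> T)"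
    using split summable_on_cong by blast
  have "infsum rfun (?h ` (K \<times> T)) = infsum (\<lambda>(k, s). rfun (p^k) * rfun s) (K \<times> T)"
    using inj split by (simp add: infsum_reindex cong: infsum_cong)
  also have "\<dots> = (\<Sum>\<^sub>\<infinity>k\<in>K. \<Sum>\<^sub>\<infinity>s\<in>T. rfun (p^k) * rfun s)"
    using summable by (rule infsum_Sigma'_banach[symmetric])
  also have "\<dots> = (\<Sum>\<^sub>\<infinity>k\<in>K. rfun (p^k)) * infsum rfun T"
    by (simp add: infsum_cmult_right' infsum_cmult_left')
  finally show ?thesis .
qed

definition artin_factor :: "nat \<Rightarrow> real" where
  "artin_factor p = 1 - 1 / (real p * (real p - 1))"

lemma has_sum_rfun_prime_powers:
  assumes "prime p"
  shows "((\<lambda>k. rfun (p^k)) has_sum 1 / artin_factor p) UNIV"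
proof -
  define x where "x = 1 / (real p)^2"
  have p2: "real p \<ge> 2" using prime_ge_2_nat[OF assms] by simp
  then have x: "norm x < 1" using power_mono[OF p2, of 2] by (simp add: x_def)
  have "((\<lambda>k. rfun_factor p * x^k) has_sum (rfun_factor p * (x / (1 - x)))) {1..}"
    by (intro has_sum_cmult_right has_sum_geometric_from_1 x)
  then have "((\<lambda>k. rfun (p^k)) has_sum (rfun_factor p * (x / (1 - x)))) {1..}"
    by (rule has_sum_cong[THEN iffD1, rotated]) (simp add: rfun_prime_power[OF assms] x_def)
  then have "((\<lambda>k. rfun (p^k)) has_sum (rfun (p^0) + rfun_factor p * (x / (1 - x)))) (insert 0 {1..})"
    by (intro has_sum_insert) auto
  moreover have "insert 0 {1..} = (UNIV :: nat set)" by auto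
  moreover have "rfun (p^0) + rfun_factor p * (x / (1 - x)) = 1 / artin_factor p"
    using prime_sq_diff_ge_1[OF assms] p2
    by (simp add: x_def rfun_factor_def artin_factor_def field_simps power2_eq_square)
  ultimately show ?thesis by simp
qed

definition smooth :: "nat set \<Rightarrow> nat set" where
  "smooth P = {t. t > 0 \<and> prime_factors t \<subseteq> P}"

lemma smooth_empty: "smooth {} = {1}"
  by (auto simp: smooth_def prime_factorization_empty_iff)

lemma smooth_insert:
  assumes "prime p" "p \<notin> P"
  shows "smooth (insert p P) = (\<lambda>(k, s). p^k * s) ` (UNIV \<times> smooth P)"
proof (intro equalityI subsetI)
  fix t assume t: "t \<in> smooth (insert p P)"
  obtain s where s: "t = p ^ multiplicity p t * s" "\<not> p dvd s"
    using t assms(1) by (auto simp: smooth_def intro: multiplicity_decompose'[of t p])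
  have "s > 0" using s t by (cases s) (auto simp: smooth_def)
  moreover have "prime_factors s \<subseteq> P"
  proof
    fix q assume q: "q \<in> prime_factors s"
    then have "q \<in> prime_factors t"
      using s(1) t by (auto simp: smooth_def in_prime_factors_iff) (metis dvd_mult)
    then show "q \<in> P" using q s(2) t by (auto simp: smooth_def in_prime_factors_iff)
  qed
  ultimately show "t \<in> (\<lambda>(k, s). p^k * s) ` (UNIV \<times> smooth P)"
    using s(1) by (force simp: smooth_def)
next
  fix t assume "t \<in> (\<lambda>(k, s). p^k * s) ` (UNIV \<times> smooth P)"
  then obtain k s where t: "t = p^k * s" "s \<in> smooth P" by auto
  have "t > 0" using t assms(1) by (simp add: smooth_def prime_gt_0_nat)
  moreover have "prime_factors t \<subseteq> insert p P"
  proof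
    fix q assume "q \<in> prime_factors t"
    then have q: "prime q" "q dvd p^k \<or> q dvd s"
      using t by (auto simp: in_prime_factors_iff prime_dvd_mult_iff)
    then have "q = p \<or> q \<in> prime_factors s"
      using assms(1) t(2) by (auto simp: smooth_def in_prime_factors_iff dest: prime_dvd_power primes_dvd_imp_eq)
    then show "q \<in> insert p P" using t(2) by (auto simp: smooth_def)
  qed
  ultimately show "t \<in> smooth (insert p P)" by (simp add: smooth_def)
qed

lemma infsum_rfun_smooth:
  assumes "finite P" "\<forall>p\<in>P. prime p"
  shows "infsum rfun (smooth P) = (\<Prod>p\<in>P. 1 / artin_factor p)"
  using assms
proof (induction P rule: finite_induct)
  case empty
  then show ?case by (simp add: smooth_empty)
next
  case (insert p P)
  have "\<forall>s\<in>smooth P. \<not> p dvd s"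
    using insert by (auto simp: smooth_def in_prime_factors_iff)
  then have "infsum rfun (smooth (insert p P)) = (\<Sum>\<^sub>\<infinity>k. rfun (p^k)) * infsum rfun (smooth P)"
    using insert by (simp add: smooth_insert infsum_rfun_prime_power_mult)
  then show ?case
    using insert has_sum_rfun_prime_powers[of p] by (simp add: infsumI)
qed

lemma greaterThanAtMost_subset_smooth: "{0<..N} \<subseteq> smooth {p. prime p \<and> p \<le> N}"
  by (auto simp: smooth_def in_prime_factors_iff dest!: dvd_imp_le)

lemma tendsto_infsum_rfun_smooth:
  "(\<lambda>N. infsum rfun (smooth {p. prime p \<and> p \<le> N})) \<longlonglongrightarrow> (\<Sum>\<^sub>\<infinity>t. rfun t)"
proof (rule tendsto_sandwich)
  show "\<forall>\<^sub>F N in sequentially. (\<Sum>t\<le>N. rfun t) \<le> infsum rfun (smooth {p. prime p \<and> p \<le> N})"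
  proof (intro always_eventually allI)
    fix N
    have "(\<Sum>t\<le>N. rfun t) = (\<Sum>t\<in>{0<..N}. rfun t)"
      by (simp add: atMost_atLeast0 sum.head)
    also have "\<dots> \<le> infsum rfun (smooth {p. prime p \<and> p \<le> N})"
      using greaterThanAtMost_subset_smooth rfun_nonneg
      by (intro finite_sum_le_infsum rfun_summable_on) auto
    finally show "(\<Sum>t\<le>N. rfun t) \<le> infsum rfun (smooth {p. prime p \<and> p \<le> N})" .
  qed
  show "\<forall>\<^sub>F N in sequentially. infsum rfun (smooth {p. prime p \<and> p \<le> N}) \<le> (\<Sum>\<^sub>\<infinity>t. rfun t)"
    by (intro always_eventually allI infsum_mono2 rfun_summable_on) (auto simp: rfun_nonneg)
  have "(\<Sum>\<^sub>\<infinity>t. rfun t) = suminf rfun"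
    using rfun_summable_on summable_rfun by (metis infsumI has_sum_infsum has_sum_imp_sums sums_unique)
  then show "(\<lambda>N. \<Sum>t\<le>N. rfun t) \<longlonglongrightarrow> (\<Sum>\<^sub>\<infinity>t. rfun t)"
    using summable_LIMSEQ'[OF summable_rfun] by simp
qed simp

text \<open>The Euler product: the partial products of artinA over the primes up to N are the
  reciprocals of the sums of r over the N-smooth numbers.\<close>
lemma artinA_mult_infsum_rfun: "artinA * (\<Sum>\<^sub>\<infinity>t. rfun t) = 1"
proof -
  define S where "S = (\<Sum>\<^sub>\<infinity>t. rfun t)"
  define f where "f n = (if prime n then artin_factor n else 1)" for n :: nat
  have "rfun (Suc 0) \<le> S"
    unfolding S_def using finite_sum_le_infsum[OF rfun_summable_on, of "{Suc 0}" UNIV] rfun_nonneg by simp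
  then have S: "S \<ge> 1" by simp
  have "(\<Prod>i\<le>N. f i) = 1 / infsum rfun (smooth {p. prime p \<and> p \<le> N})" for N
  proof -
    have "(\<Prod>i\<le>N. f i) = (\<Prod>p\<in>{p. prime p \<and> p \<le> N}. artin_factor p)"
      unfolding f_def by (subst prod.inter_filter[symmetric]) (auto intro: prod.cong)
    then show ?thesis
      by (simp add: infsum_rfun_smooth prod_dividef)
  qed
  moreover have "(\<lambda>N. 1 / infsum rfun (smooth {p. prime p \<and> p \<le> N})) \<longlonglongrightarrow> 1 / S"
    using S unfolding S_def by (intro tendsto_divide tendsto_const tendsto_infsum_rfun_smooth) auto
  ultimately have "f has_prod (1 / S)"
    using S by (simp add: has_prod_def raw_has_prod_def)
  then have "artinA = 1 / S"
    unfolding artinA_def f_def artin_factor_def by (simp add: has_prod_unique[symmetric])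
  then show ?thesis using S by (simp flip: S_def add: field_simps)
qed

lemma eventually_periodic_power_mod:
  fixes p d :: nat
  assumes "d > 0"
  obtains N L where "L > 0" "\<And>k. k \<ge> N \<Longrightarrow> [p^(k + L) = p^k] (mod d)"
proof -
  have "card ((\<lambda>i. p^i mod d) ` {..d}) \<le> card {..<d}"
    using assms by (intro card_mono) auto
  then have "\<not> inj_on (\<lambda>i. p^i mod d) {..d}"
    by (intro pigeonhole) simp
  then obtain i j where ij: "i < j" "[p^i = p^j] (mod d)"
    unfolding inj_on_def cong_def by (metis linorder_neqE_nat)
  show ?thesis
  proof (rule that[of "j - i" i])
    fix k assume "k \<ge> i"
    then have "p^(k + (j - i)) = p^(k - i) * p^j" "p^k = p^(k - i) * p^i"
      using ij by (simp_all flip: power_add)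
    then show "[p^(k + (j - i)) = p^k] (mod d)"
      using ij by (metis cong_scalar_left cong_sym)
  qed (use ij in simp)
qed

lemma eventually_periodic_tail_eq:
  fixes K :: "nat set"
  assumes periodic: "\<And>k. k \<ge> N \<Longrightarrow> k \<in> K \<longleftrightarrow> k + L \<in> K"
  shows "K \<inter> {N..} = (K \<inter> {N..<N + L}) \<union> (\<lambda>k. k + L) ` (K \<inter> {N..})"
proof (intro equalityI subsetI)
  fix k assume k: "k \<in> K \<inter> {N..}"
  show "k \<in> (K \<inter> {N..<N + L}) \<union> (\<lambda>k. k + L) ` (K \<inter> {N..})"
  proof (cases "k < N + L")
    case False
    then have "k - L \<in> K \<inter> {N..}" and "k = k - L + L"
      using k periodic[of "k - L"] by auto
    then show ?thesis by blast
  qed (use k in auto)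
next
  fix k assume "k \<in> (K \<inter> {N..<N + L}) \<union> (\<lambda>k. k + L) ` (K \<inter> {N..})"
  then consider "k \<in> K \<inter> {N..<N + L}" | j where "j \<in> K \<inter> {N..}" "k = j + L"
    by blast
  then show "k \<in> K \<inter> {N..}"
  proof cases
    case 2
    then show ?thesis using periodic[of j] by auto
  qed auto
qed

text \<open>Self-similarity of the tail: S = (finite rational sum) + x^L S.\<close>
lemma infsum_power_rat_if_eventually_periodic:
  fixes x :: real and K :: "nat set"
  assumes x: "x \<in> \<rat>" "0 \<le> x" "x < 1" and L: "L > 0"
    and periodic: "\<And>k. k \<ge> N \<Longrightarrow> k \<in> K \<longleftrightarrow> k + L \<in> K"
  shows "(\<Sum>\<^sub>\<infinity>k\<in>K. x^k) \<in> \<rat>"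
proof -
  define T where "T = K \<inter> {N..}"
  define S where "S = (\<Sum>\<^sub>\<infinity>k\<in>T. x^k)"
  have summable: "(\<lambda>k. x^k) summable_on B" for B
  proof -
    have "(\<lambda>k. x^k) summable_on UNIV"
      using x by (subst summable_on_UNIV_nonneg_real_iff) (auto intro: summable_geometric)
    then show ?thesis by (rule summable_on_subset_banach) simp
  qed
  have "T = (K \<inter> {N..<N + L}) \<union> (\<lambda>k. k + L) ` T"
    unfolding T_def by (rule eventually_periodic_tail_eq[OF periodic])
  then have "S = (\<Sum>\<^sub>\<infinity>k\<in>(K \<inter> {N..<N + L}) \<union> (\<lambda>k. k + L) ` T. x^k)"
    unfolding S_def by (rule arg_cong)
  also have "\<dots> = (\<Sum>k\<in>K \<inter> {N..<N + L}. x^k) + (\<Sum>\<^sub>\<infinity>k\<in>(\<lambda>k. k + L) ` T. x^k)"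
    by (subst infsum_Un_disjoint) (auto simp: summable T_def)
  also have "(\<Sum>\<^sub>\<infinity>k\<in>(\<lambda>k. k + L) ` T. x^k) = x^L * S"
    by (subst infsum_reindex) (auto simp: o_def S_def power_add infsum_cmult_left')
  finally have "S * (1 - x^L) = (\<Sum>k\<in>K \<inter> {N..<N + L}. x^k)"
    by (simp add: algebra_simps)
  moreover have "x^L < 1" using x L by (simp add: power_less_one_iff)
  ultimately have "S = (\<Sum>k\<in>K \<inter> {N..<N + L}. x^k) / (1 - x^L)"
    by (simp add: field_simps)
  then have S: "S \<in> \<rat>" using x by (auto intro!: Rats_divide Rats_diff Rats_power Rats_sum)
  have "K = (K \<inter> {..<N}) \<union> T" by (auto simp: T_def)
  then have "(\<Sum>\<^sub>\<infinity>k\<in>K. x^k) = (\<Sum>\<^sub>\<infinity>k\<in>(K \<inter> {..<N}) \<union> T. x^k)"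
    by (rule arg_cong)
  also have "\<dots> = (\<Sum>k\<in>K \<inter> {..<N}. x^k) + S"
    unfolding S_def by (subst infsum_Un_disjoint) (auto simp: summable T_def)
  finally show ?thesis using x S by (auto intro!: Rats_add Rats_sum Rats_power)
qed

definition residue_class :: "nat \<Rightarrow> nat \<Rightarrow> nat set" where
  "residue_class d s = {t. t > 0 \<and> [t = s] (mod d)}"

definition class_sum :: "nat \<Rightarrow> nat \<Rightarrow> real" where
  "class_sum d s = infsum rfun (residue_class d s)"

lemma rho_eq_class_sum:
  assumes "d > 0"
  shows "rho a d = artinA * class_sum d (nat (a mod int d))"
proof -
  define s where "s = nat (a mod int d)"
  have s: "int s = a mod int d" "s < d" using assms by (auto simp: s_def nat_less_iff)
  have "[int t = a] (mod int d) \<longleftrightarrow> [t = s] (mod d)" for t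
  proof -
    have "[int t = a] (mod int d) \<longleftrightarrow> int (t mod d) = int s"
      by (simp add: cong_def zmod_int s(1))
    also have "\<dots> \<longleftrightarrow> [t = s] (mod d)"
      using s(2) by (simp add: cong_def)
    finally show ?thesis .
  qed
  then show ?thesis unfolding s_def
    unfolding rho_def class_sum_def residue_class_def by (simp add: Suc_le_eq)
qed

lemma sum_class_sum:
  assumes "d > 0"
  shows "(\<Sum>\<sigma><d. class_sum d \<sigma>) = (\<Sum>\<^sub>\<infinity>t. rfun t)"
proof -
  have "(\<Union>\<sigma><d. residue_class d \<sigma>) = {t. t > 0}"
    using assms by (auto simp: residue_class_def cong_def)
  moreover have "(\<Sum>\<sigma><d. class_sum d \<sigma>) = infsum rfun (\<Union>\<sigma><d. residue_class d \<sigma>)"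
    unfolding class_sum_def
    by (rule sum_infsum) (auto simp: residue_class_def cong_def rfun_summable_on)
  ultimately have "(\<Sum>\<sigma><d. class_sum d \<sigma>) = infsum rfun {t. t > 0}"
    by simp
  also have "\<dots> = (\<Sum>\<^sub>\<infinity>t. rfun t)"
    by (rule infsum_cong_neutral) auto
  finally show ?thesis .
qed

definition peel_exponents :: "nat \<Rightarrow> nat \<Rightarrow> nat \<Rightarrow> nat \<Rightarrow> nat set" where
  "peel_exponents d p \<sigma> \<tau> = {k. k \<ge> 1 \<and> [p^k * \<tau> = \<sigma>] (mod d)}"

definition peel_coeff :: "nat \<Rightarrow> nat \<Rightarrow> nat \<Rightarrow> nat \<Rightarrow> real" where
  "peel_coeff d p \<sigma> \<tau> = (\<Sum>\<^sub>\<infinity>k\<in>peel_exponents d p \<sigma> \<tau>. rfun (p^k))"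

lemma peel_coeff_nonneg: "peel_coeff d p \<sigma> \<tau> \<ge> 0"
  unfolding peel_coeff_def by (intro infsum_nonneg rfun_nonneg)

lemma peel_coeff_rat:
  assumes "d > 0" "prime p"
  shows "peel_coeff d p \<sigma> \<tau> \<in> \<rat>"
proof -
  obtain N L where L: "L > 0" and periodic: "\<And>k. k \<ge> N \<Longrightarrow> [p^(k + L) = p^k] (mod d)"
    using eventually_periodic_power_mod[OF assms(1)] by blast
  define x where "x = 1 / (real p)^2"
  have x: "x \<in> \<rat>" "0 \<le> x" "x < 1"
    using power_mono[of 2 "real p" 2] prime_ge_2_nat[OF assms(2)] by (auto simp: x_def divide_less_eq)
  have "peel_coeff d p \<sigma> \<tau> = (\<Sum>\<^sub>\<infinity>k\<in>peel_exponents d p \<sigma> \<tau>. rfun_factor p * x^k)"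
    unfolding peel_coeff_def x_def
    by (intro infsum_cong) (auto simp: peel_exponents_def rfun_prime_power[OF assms(2)])
  also have "\<dots> = rfun_factor p * (\<Sum>\<^sub>\<infinity>k\<in>peel_exponents d p \<sigma> \<tau>. x^k)"
    by (simp add: infsum_cmult_right')
  finally have eq: "peel_coeff d p \<sigma> \<tau> = rfun_factor p * (\<Sum>\<^sub>\<infinity>k\<in>peel_exponents d p \<sigma> \<tau>. x^k)" .
  have "(\<Sum>\<^sub>\<infinity>k\<in>peel_exponents d p \<sigma> \<tau>. x^k) \<in> \<rat>"
  proof (rule infsum_power_rat_if_eventually_periodic[OF x L])
    fix k assume k: "k \<ge> N + 1"
    have "[p^(k + L) * \<tau> = p^k * \<tau>] (mod d)"
      using periodic[of k] k by (intro cong_scalar_right) auto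
    then show "k \<in> peel_exponents d p \<sigma> \<tau> \<longleftrightarrow> k + L \<in> peel_exponents d p \<sigma> \<tau>"
      using k by (auto simp: peel_exponents_def intro: cong_trans cong_sym)
  qed
  then show ?thesis using eq rfun_factor_rat by simp
qed

lemma not_dvd_if_in_residue_class:
  fixes p :: nat
  assumes "p dvd d" "\<not> p dvd \<tau>" "s \<in> residue_class d \<tau>"
  shows "\<not> p dvd s"
proof -
  have "[s = \<tau>] (mod p)" using assms by (auto simp: residue_class_def intro: cong_dvd_modulus_nat)
  then show ?thesis using assms(2) cong_dvd_iff by blast
qed

lemma residue_class_eq_UN_peel:
  assumes "d > 0" "prime p" "p dvd d" "p dvd \<sigma>"
  shows "residue_class d \<sigma> = (\<Union>\<tau>\<in>{\<tau>. \<tau> < d \<and> \<not> p dvd \<tau>}.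
           (\<lambda>(k, s). p^k * s) ` (peel_exponents d p \<sigma> \<tau> \<times> residue_class d \<tau>))"
proof (intro equalityI subsetI)
  fix t assume t: "t \<in> residue_class d \<sigma>"
  then have "p dvd t"
    using assms by (auto simp: residue_class_def cong_dvd_iff dest: cong_dvd_modulus_nat)
  obtain s where s: "t = p ^ multiplicity p t * s" "\<not> p dvd s"
    using t assms(2) by (auto simp: residue_class_def intro: multiplicity_decompose'[of t p])
  define k where "k = multiplicity p t"
  define \<tau> where "\<tau> = s mod d"
  have k: "k \<ge> 1"
    using \<open>p dvd t\<close> t assms(2) by (auto simp: k_def residue_class_def Suc_le_eq prime_multiplicity_gt_zero_iff)
  have "s > 0" using s t by (cases s) (auto simp: residue_class_def)
  then have "s \<in> residue_class d \<tau>" by (simp add: residue_class_def \<tau>_def cong_def)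
  moreover have "\<not> p dvd \<tau>"
    using s(2) assms(3) by (simp add: \<tau>_def dvd_mod_iff)
  moreover have "[p^k * \<tau> = \<sigma>] (mod d)"
    using t s(1) unfolding k_def[symmetric]
    by (auto simp: residue_class_def \<tau>_def cong_def mod_mult_right_eq)
  ultimately have "(k, s) \<in> peel_exponents d p \<sigma> \<tau> \<times> residue_class d \<tau>" "\<tau> \<in> {\<tau>. \<tau> < d \<and> \<not> p dvd \<tau>}"
    using k assms(1) by (auto simp: peel_exponents_def \<tau>_def)
  moreover have "t = (\<lambda>(k, s). p^k * s) (k, s)" using s(1) by (simp add: k_def)
  ultimately show "t \<in> (\<Union>\<tau>\<in>{\<tau>. \<tau> < d \<and> \<not> p dvd \<tau>}.
           (\<lambda>(k, s). p^k * s) ` (peel_exponents d p \<sigma> \<tau> \<times> residue_class d \<tau>))"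
    by blast
next
  fix t assume "t \<in> (\<Union>\<tau>\<in>{\<tau>. \<tau> < d \<and> \<not> p dvd \<tau>}.
           (\<lambda>(k, s). p^k * s) ` (peel_exponents d p \<sigma> \<tau> \<times> residue_class d \<tau>))"
  then obtain \<tau> k s where "t = p^k * s" "[p^k * \<tau> = \<sigma>] (mod d)" "s \<in> residue_class d \<tau>"
    by (auto simp: peel_exponents_def)
  then show "t \<in> residue_class d \<sigma>"
    using assms(2) by (auto simp: residue_class_def prime_gt_0_nat intro: cong_trans cong_scalar_left)
qed

lemma class_sum_peel:
  assumes "d > 0" "prime p" "p dvd d" "p dvd \<sigma>"
  shows "class_sum d \<sigma> = (\<Sum>\<tau> | \<tau> < d \<and> \<not> p dvd \<tau>. peel_coeff d p \<sigma> \<tau> * class_sum d \<tau>)"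
proof -
  let ?D = "{\<tau>. \<tau> < d \<and> \<not> p dvd \<tau>}"
  let ?W = "\<lambda>\<tau>. (\<lambda>(k, s). p^k * s) ` (peel_exponents d p \<sigma> \<tau> \<times> residue_class d \<tau>)"
  have coprime_part: "\<forall>s\<in>residue_class d \<tau>. \<not> p dvd s" if "\<tau> \<in> ?D" for \<tau>
    using that assms(3) not_dvd_if_in_residue_class by blast
  have disjoint: "?W \<tau> \<inter> ?W \<tau>' = {}" if "\<tau> \<in> ?D" "\<tau>' \<in> ?D" "\<tau> \<noteq> \<tau>'" for \<tau> \<tau>'
  proof (rule ccontr)
    assume "?W \<tau> \<inter> ?W \<tau>' \<noteq> {}"
    then obtain k s k' s' where "s \<in> residue_class d \<tau>" "s' \<in> residue_class d \<tau>'"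
      and eq: "p^k * s = p^k' * s'" by auto
    moreover from this have "inj_on (\<lambda>(k, s). p^k * s) (UNIV \<times> {s, s'})"
      using coprime_part that by (intro inj_on_prime_power_mult assms(2)) auto
    ultimately have "s = s'"
      using eq by (auto dest: inj_onD[of _ _ "(k, s)" "(k', s')"])
    then have "[\<tau> = \<tau>'] (mod d)"
      using \<open>s \<in> residue_class d \<tau>\<close> \<open>s' \<in> residue_class d \<tau>'\<close>
      by (auto simp: residue_class_def intro: cong_trans cong_sym)
    then show False using that by (auto simp: cong_def)
  qed
  have "class_sum d \<sigma> = (\<Sum>\<tau>\<in>?D. infsum rfun (?W \<tau>))"
    unfolding class_sum_def residue_class_eq_UN_peel[OF assms]
    by (rule sum_infsum[symmetric]) (use disjoint rfun_summable_on in auto)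
  also have "\<dots> = (\<Sum>\<tau>\<in>?D. peel_coeff d p \<sigma> \<tau> * class_sum d \<tau>)"
    unfolding peel_coeff_def class_sum_def
    using coprime_part by (intro sum.cong refl infsum_rfun_prime_power_mult assms(2))
  finally show ?thesis .
qed

lemma gcd_less_if_peel_coeff_nonzero:
  assumes "d > 0" "prime p" "p dvd d" "p dvd \<sigma>" "\<not> p dvd \<tau>"
    and "peel_coeff d p \<sigma> \<tau> \<noteq> 0"
  shows "gcd \<tau> d < gcd \<sigma> d"
proof -
  obtain k where "[p^k * \<tau> = \<sigma>] (mod d)"
    using assms(6) by (force simp: peel_coeff_def peel_exponents_def)
  then have "[p^k * \<tau> = \<sigma>] (mod gcd \<tau> d)"
    by (rule cong_dvd_modulus_nat) simp
  then have "gcd \<tau> d dvd \<sigma>"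
    using cong_dvd_iff by (metis dvd_mult gcd_dvd1)
  then have "gcd \<tau> d dvd gcd \<sigma> d" by simp
  moreover have "p dvd gcd \<sigma> d" "\<not> p dvd gcd \<tau> d"
    using assms(3-5) by auto
  then have "gcd \<tau> d \<noteq> gcd \<sigma> d" by metis
  ultimately show ?thesis
    using assms(1) by (simp add: dvd_imp_le le_neq_implies_less)
qed

definition coprime_residues :: "nat \<Rightarrow> nat set" where
  "coprime_residues d = {\<beta>. \<beta> < d \<and> coprime \<beta> d}"

lemma finite_coprime_residues [simp]: "finite (coprime_residues d)"
  unfolding coprime_residues_def by (rule finite_subset[of _ "{..<d}"]) auto

lemma card_coprime_residues:
  assumes "d > 0"
  shows "card (coprime_residues d) = totient d"
proof (cases "d = 1")
  case False
  have "coprime_residues d = totatives d"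
  proof (intro equalityI subsetI)
    fix b assume "b \<in> coprime_residues d"
    moreover from this have "b \<noteq> 0" using False by (cases b) (auto simp: coprime_residues_def)
    ultimately show "b \<in> totatives d" by (auto simp: coprime_residues_def totatives_def)
  next
    fix b assume "b \<in> totatives d"
    moreover from this have "b \<noteq> d" using False by (auto simp: totatives_def)
    ultimately show "b \<in> coprime_residues d" by (auto simp: coprime_residues_def totatives_def)
  qed
  then show ?thesis by (simp add: totient_def)
qed (auto simp: coprime_residues_def)

definition nonneg_rat_cone :: "'a set \<Rightarrow> ('a \<Rightarrow> real) \<Rightarrow> real set" where
  "nonneg_rat_cone B v = {\<Sum>\<beta>\<in>B. c \<beta> * v \<beta> | c. \<forall>\<beta>\<in>B. c \<beta> \<in> \<rat> \<and> c \<beta> \<ge> 0}"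

lemma nonneg_rat_cone_generator:
  assumes "finite B" "\<beta> \<in> B"
  shows "v \<beta> \<in> nonneg_rat_cone B v"
proof -
  have "(\<Sum>b\<in>B. (if b = \<beta> then 1 else 0) * v b) = (\<Sum>b\<in>B. if b = \<beta> then v b else 0)"
    by (intro sum.cong) auto
  also have "\<dots> = v \<beta>" using assms by (simp add: sum.delta)
  finally show ?thesis
    unfolding nonneg_rat_cone_def by (intro CollectI exI[of _ "\<lambda>b. if b = \<beta> then 1 else 0"]) auto
qed

lemma nonneg_rat_cone_add:
  assumes "x \<in> nonneg_rat_cone B v" "y \<in> nonneg_rat_cone B v"
  shows "x + y \<in> nonneg_rat_cone B v"
proof -
  obtain c c' where "x = (\<Sum>\<beta>\<in>B. c \<beta> * v \<beta>)" "y = (\<Sum>\<beta>\<in>B. c' \<beta> * v \<beta>)"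
    and "\<forall>\<beta>\<in>B. c \<beta> \<in> \<rat> \<and> c \<beta> \<ge> 0" "\<forall>\<beta>\<in>B. c' \<beta> \<in> \<rat> \<and> c' \<beta> \<ge> 0"
    using assms by (auto simp: nonneg_rat_cone_def)
  then show ?thesis
    unfolding nonneg_rat_cone_def
    by (intro CollectI exI[of _ "\<lambda>\<beta>. c \<beta> + c' \<beta>"]) (simp add: distrib_right sum.distrib)
qed

lemma nonneg_rat_cone_scale:
  assumes "q \<in> \<rat>" "q \<ge> 0" "x \<in> nonneg_rat_cone B v"
  shows "q * x \<in> nonneg_rat_cone B v"
proof -
  obtain c where "x = (\<Sum>\<beta>\<in>B. c \<beta> * v \<beta>)" "\<forall>\<beta>\<in>B. c \<beta> \<in> \<rat> \<and> c \<beta> \<ge> 0"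
    using assms(3) by (auto simp: nonneg_rat_cone_def)
  then show ?thesis
    using assms(1,2) unfolding nonneg_rat_cone_def
    by (intro CollectI exI[of _ "\<lambda>\<beta>. q * c \<beta>"]) (simp add: sum_distrib_left mult.assoc)
qed

lemma nonneg_rat_cone_sum:
  assumes "finite A" "\<And>a. a \<in> A \<Longrightarrow> f a \<in> nonneg_rat_cone B v"
  shows "sum f A \<in> nonneg_rat_cone B v"
  using assms
proof (induction A rule: finite_induct)
  case empty
  show ?case
    unfolding nonneg_rat_cone_def by (intro CollectI exI[of _ "\<lambda>_. 0"]) simp
qed (simp add: nonneg_rat_cone_add)

lemma class_sum_in_nonneg_rat_cone:
  assumes "d > 0" "\<sigma> < d"
  shows "class_sum d \<sigma> \<in> nonneg_rat_cone (coprime_residues d) (class_sum d)"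
  using assms(2)
proof (induction "gcd \<sigma> d" arbitrary: \<sigma> rule: less_induct)
  case less
  show ?case
  proof (cases "coprime \<sigma> d")
    case True
    then show ?thesis
      using less.prems by (intro nonneg_rat_cone_generator) (auto simp: coprime_residues_def)
  next
    case False
    then obtain p where p: "prime p" "p dvd \<sigma>" "p dvd d"
      by (metis coprime_iff_gcd_eq_1 gcd_dvd1 gcd_dvd2 dvd_trans prime_factor_nat)
    have "class_sum d \<sigma> = (\<Sum>\<tau> | \<tau> < d \<and> \<not> p dvd \<tau>. peel_coeff d p \<sigma> \<tau> * class_sum d \<tau>)"
      using class_sum_peel[OF assms(1) p(1,3,2)] .
    also have "\<dots> \<in> nonneg_rat_cone (coprime_residues d) (class_sum d)"
    proof (intro nonneg_rat_cone_sum)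
      fix \<tau> assume \<tau>: "\<tau> \<in> {\<tau>. \<tau> < d \<and> \<not> p dvd \<tau>}"
      show "peel_coeff d p \<sigma> \<tau> * class_sum d \<tau> \<in> nonneg_rat_cone (coprime_residues d) (class_sum d)"
      proof (cases "peel_coeff d p \<sigma> \<tau> = 0")
        case True
        then show ?thesis using nonneg_rat_cone_sum[of "{}"] by simp
      next
        case False
        then have "gcd \<tau> d < gcd \<sigma> d"
          using \<tau> gcd_less_if_peel_coeff_nonzero[OF assms(1) p(1,3,2)] by simp
        then have "class_sum d \<tau> \<in> nonneg_rat_cone (coprime_residues d) (class_sum d)"
          using \<tau> less.hyps by simp
        then show ?thesis
          by (rule nonneg_rat_cone_scale[OF peel_coeff_rat[OF assms(1) p(1)] peel_coeff_nonneg])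
      qed
    qed auto
    finally show ?thesis .
  qed
qed

lemma Qring_sum:
  assumes "finite A" "\<And>a. a \<in> A \<Longrightarrow> f a \<in> Qring S"
  shows "sum f A \<in> Qring S"
  using assms by (induction A rule: finite_induct) (auto intro: Qring.intros)

lemma Qring_rat_mult: "q \<in> \<rat> \<Longrightarrow> x \<in> Qring S \<Longrightarrow> q * x \<in> Qring S"
  by (rule Qring.mult[OF Qring.rat])

lemma Qring_solve_linear_relation:
  assumes "finite B" "\<beta>\<^sub>0 \<in> B" "\<And>\<beta>. \<beta> \<in> B \<Longrightarrow> c \<beta> \<in> \<rat>" "c \<beta>\<^sub>0 \<noteq> 0"
    and "\<And>\<beta>. \<beta> \<in> B - {\<beta>\<^sub>0} \<Longrightarrow> y \<beta> \<in> Qring S"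
    and "(\<Sum>\<beta>\<in>B. c \<beta> * y \<beta>) \<in> Qring S"
  shows "y \<beta>\<^sub>0 \<in> Qring S"
proof -
  let ?rest = "\<Sum>\<beta>\<in>B - {\<beta>\<^sub>0}. c \<beta> * y \<beta>"
  have "?rest \<in> Qring S"
    using assms by (intro Qring_sum Qring_rat_mult) auto
  then have "(1 / c \<beta>\<^sub>0) * ((\<Sum>\<beta>\<in>B. c \<beta> * y \<beta>) + (-1) * ?rest) \<in> Qring S"
    using assms(2,3,6) by (intro Qring_rat_mult Qring.add) auto
  moreover have "(\<Sum>\<beta>\<in>B. c \<beta> * y \<beta>) = c \<beta>\<^sub>0 * y \<beta>\<^sub>0 + ?rest"
    using assms(1,2) by (rule sum.remove)
  ultimately show ?thesis using assms(4) by simp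
qed

lemma coprime_class_sums_relation:
  assumes "d > 0"
  obtains c where "\<And>\<beta>. \<beta> \<in> coprime_residues d \<Longrightarrow> c \<beta> \<in> \<rat> \<and> c \<beta> \<ge> 1"
    and "(\<Sum>\<beta>\<in>coprime_residues d. c \<beta> * (artinA * class_sum d \<beta>)) = 1"
proof -
  let ?R = "coprime_residues d"
  let ?N = "{\<sigma>. \<sigma> < d \<and> \<not> coprime \<sigma> d}"
  have "(\<Sum>\<sigma>\<in>?N. class_sum d \<sigma>) \<in> nonneg_rat_cone ?R (class_sum d)"
    using assms by (intro nonneg_rat_cone_sum class_sum_in_nonneg_rat_cone) auto
  then obtain c where c: "\<And>\<beta>. \<beta> \<in> ?R \<Longrightarrow> c \<beta> \<in> \<rat> \<and> c \<beta> \<ge> 0"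
    and N: "(\<Sum>\<sigma>\<in>?N. class_sum d \<sigma>) = (\<Sum>\<beta>\<in>?R. c \<beta> * class_sum d \<beta>)"
    by (auto simp: nonneg_rat_cone_def)
  have split: "{..<d} = ?R \<union> ?N" by (auto simp: coprime_residues_def)
  have "finite ?N" by (rule finite_subset[of _ "{..<d}"]) auto
  then have "(\<Sum>\<sigma><d. class_sum d \<sigma>) = (\<Sum>\<beta>\<in>?R. class_sum d \<beta>) + (\<Sum>\<sigma>\<in>?N. class_sum d \<sigma>)"
    unfolding split by (intro sum.union_disjoint) (auto simp: coprime_residues_def)
  then have "(\<Sum>\<beta>\<in>?R. (1 + c \<beta>) * (artinA * class_sum d \<beta>)) = artinA * (\<Sum>\<sigma><d. class_sum d \<sigma>)"
    by (simp add: N algebra_simps sum.distrib sum_distrib_left)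
  also have "\<dots> = 1"
    using assms by (simp add: sum_class_sum artinA_mult_infsum_rfun)
  finally show ?thesis
    using c by (intro that[of "\<lambda>\<beta>. 1 + c \<beta>"]) auto
qed

lemma class_sum_in_Qring:
  assumes "d > 0" "\<beta>\<^sub>0 \<in> coprime_residues d"
    and "\<And>\<beta>. \<beta> \<in> coprime_residues d - {\<beta>\<^sub>0} \<Longrightarrow> artinA * class_sum d \<beta> \<in> Qring S"
    and "\<sigma> < d"
  shows "artinA * class_sum d \<sigma> \<in> Qring S"
proof -
  obtain c where c: "\<And>\<beta>. \<beta> \<in> coprime_residues d \<Longrightarrow> c \<beta> \<in> \<rat> \<and> c \<beta> \<ge> 1"
    and one: "(\<Sum>\<beta>\<in>coprime_residues d. c \<beta> * (artinA * class_sum d \<beta>)) = 1"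
    using coprime_class_sums_relation[OF assms(1)] by blast
  have "artinA * class_sum d \<beta>\<^sub>0 \<in> Qring S"
  proof (rule Qring_solve_linear_relation[where c = c])
    show "c \<beta>\<^sub>0 \<noteq> 0" using c[OF assms(2)] by simp
    show "(\<Sum>\<beta>\<in>coprime_residues d. c \<beta> * (artinA * class_sum d \<beta>)) \<in> Qring S"
      unfolding one by (rule Qring.rat) simp
  qed (use c assms(2,3) in auto)
  then have coprime: "artinA * class_sum d \<beta> \<in> Qring S" if "\<beta> \<in> coprime_residues d" for \<beta>
    using that assms(3) by (cases "\<beta> = \<beta>\<^sub>0") auto
  obtain c' where c': "\<And>\<beta>. \<beta> \<in> coprime_residues d \<Longrightarrow> c' \<beta> \<in> \<rat>"
    and "class_sum d \<sigma> = (\<Sum>\<beta>\<in>coprime_residues d. c' \<beta> * class_sum d \<beta>)"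
    using class_sum_in_nonneg_rat_cone[OF assms(1,4)] by (auto simp: nonneg_rat_cone_def)
  then have "artinA * class_sum d \<sigma> = (\<Sum>\<beta>\<in>coprime_residues d. c' \<beta> * (artinA * class_sum d \<beta>))"
    by (simp add: sum_distrib_left mult.left_commute)
  also have "\<dots> \<in> Qring S"
    by (rule Qring_sum) (simp_all add: Qring_rat_mult c' coprime)
  finally show ?thesis .
qed

lemma image_reduced_residue_system:
  fixes \<alpha> :: "nat \<Rightarrow> int"
  assumes "d > 0"
    and "\<forall>i\<in>{1..totient d}. coprime (\<alpha> i) (int d)"
    and "\<forall>i\<in>{1..totient d}. \<forall>j\<in>{1..totient d}. [\<alpha> i = \<alpha> j] (mod int d) \<longrightarrow> i = j"
  shows "(\<lambda>i. nat (\<alpha> i mod int d)) ` {1..totient d} = coprime_residues d"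
proof (rule card_subset_eq)
  show "(\<lambda>i. nat (\<alpha> i mod int d)) ` {1..totient d} \<subseteq> coprime_residues d"
    using assms(1,2) by (auto simp: coprime_residues_def nat_less_iff simp flip: coprime_int_iff)
  have "inj_on (\<lambda>i. nat (\<alpha> i mod int d)) {1..totient d}"
    using assms(1,3) by (auto intro!: inj_onI simp: cong_def eq_nat_nat_iff)
  then show "card ((\<lambda>i. nat (\<alpha> i mod int d)) ` {1..totient d}) = card (coprime_residues d)"
    using assms(1) by (simp add: card_image card_coprime_residues)
qed simp

theorem mainTheorem10:
  fixes d :: nat and \<alpha> :: "nat \<Rightarrow> int" and a :: int
  assumes "d \<ge> 1"
    and "\<forall>i\<in>{1..totient d}. coprime (\<alpha> i) (int d)"
    and "\<forall>i\<in>{1..totient d}. \<forall>j\<in>{1..totient d}. [\<alpha> i = \<alpha> j] (mod int d) \<longrightarrow> i = j"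
  shows "rho a d \<in> Qring ((\<lambda>i. rho (\<alpha> i) d) ` {1..totient d - 1})"
proof -
  define m where "m i = nat (\<alpha> i mod int d)" for i
  have d: "d > 0" using assms(1) by simp
  have m: "m ` {1..totient d} = coprime_residues d"
    unfolding m_def using image_reduced_residue_system[OF d assms(2,3)] .
  have rho_m: "rho (\<alpha> i) d = artinA * class_sum d (m i)" for i
    unfolding m_def by (rule rho_eq_class_sum[OF d])
  have \<beta>\<^sub>0: "m (totient d) \<in> coprime_residues d"
    using m d by (auto simp: Suc_le_eq)
  have others: "artinA * class_sum d \<beta> \<in> Qring ((\<lambda>i. rho (\<alpha> i) d) ` {1..totient d - 1})"
    if \<beta>: "\<beta> \<in> coprime_residues d - {m (totient d)}" for \<beta>
  proof -
    have "\<beta> \<in> m ` {1..totient d}" using \<beta> m by simp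
    then obtain i where i: "i \<in> {1..totient d}" "\<beta> = m i" by blast
    then have "i \<in> {1..totient d - 1}" using \<beta> by (cases "i = totient d") auto
    then have "rho (\<alpha> i) d \<in> (\<lambda>i. rho (\<alpha> i) d) ` {1..totient d - 1}" by (rule imageI)
    then show ?thesis unfolding i(2) rho_m by (rule Qring.gen)
  qed
  have "nat (a mod int d) < d"
    using d by (simp add: nat_less_iff)
  from class_sum_in_Qring[OF d \<beta>\<^sub>0 others this] show ?thesis
    by (simp only: rho_eq_class_sum[OF d, of a])
qed

end
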